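(* Let $A$ be a totally ordered alphabet, $F(A)$ the free group on $A$, and $\ell\in A$. If $g\in F(A)$ is a palindrome, then $\lambda_\ell(g)\ell$ is a palindrome and $\ell\rho_\ell(g)$ is a palindrome.
   Context: The reversal $g\mapsto\tilde g$ is the unique anti-automorphism of $F(A)$ with $\tilde a=a$ for all $a\in A$; a palindrome is an element $g$ with $\tilde g=g$. For $\ell\in A$, $\lambda_\ell$ and $\rho_\ell$ are the automorphisms of $F(A)$ defined on letters $a\in A$ by: $\lambda_\ell(a)=a\ell^{-1}$ if $a<\ell$, $\lambda_\ell(\ell)=\ell$, $\lambda_\ell(a)=\ell a$ if $a>\ell$; and $\rho_\ell(a)=a\ell$ if $a<\ell$, $\rho_\ell(\ell)=\ell$, $\rho_\ell(a)=\ell^{-1}a$ if $a>\ell$. *)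

theory Defs
  imports Main
begin

text \<open>Free group F(A) on a totally ordered alphabet A (here the type 'a :: linorder),
  represented by freely reduced words. A letter (True, a) stands for a, (False, a) for a^-1.\<close>

type_synonym 'a letter = "bool \<times> 'a"

definition cancels :: "'a letter \<Rightarrow> 'a letter \<Rightarrow> bool" where
  "cancels x y \<longleftrightarrow> snd x = snd y \<and> fst x \<noteq> fst y"

fun reduced :: "'a letter list \<Rightarrow> bool" where
  "reduced [] = True"
| "reduced [x] = True"
| "reduced (x # y # ys) = (\<not> cancels x y \<and> reduced (y # ys))"

definition reduce :: "'a letter list \<Rightarrow> 'a letter list" where
  "reduce w = foldr (\<lambda>x acc. case acc of [] \<Rightarrow> [x]
                              | y # ys \<Rightarrow> (if cancels x y then ys else x # acc)) w []"

definition fg_mult :: "'a letter list \<Rightarrow> 'a letter list \<Rightarrow> 'a letter list" where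
  "fg_mult u v = reduce (u @ v)"

definition fg_inv :: "'a letter list \<Rightarrow> 'a letter list" where
  "fg_inv w = map (\<lambda>(b, a). (\<not> b, a)) (rev w)"

definition gen :: "'a \<Rightarrow> 'a letter list" where
  "gen a = [(True, a)]"

definition extend_hom :: "('a \<Rightarrow> 'a letter list) \<Rightarrow> 'a letter list \<Rightarrow> 'a letter list" where
  "extend_hom f w = reduce (concat (map (\<lambda>(b, a). if b then f a else fg_inv (f a)) w))"

text \<open>Reversal: the anti-automorphism fixing each letter of A.\<close>
definition reversal :: "'a letter list \<Rightarrow> 'a letter list" where
  "reversal w = rev w"

definition palindrome :: "'a letter list \<Rightarrow> bool" where
  "palindrome g \<longleftrightarrow> reversal g = g"

definition lambda_letter :: "'a::linorder \<Rightarrow> 'a \<Rightarrow> 'a letter list" where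
  "lambda_letter l a = (if a < l then fg_mult (gen a) (fg_inv (gen l))
                        else if a = l then gen l else fg_mult (gen l) (gen a))"

definition rho_letter :: "'a::linorder \<Rightarrow> 'a \<Rightarrow> 'a letter list" where
  "rho_letter l a = (if a < l then fg_mult (gen a) (gen l)
                     else if a = l then gen l else fg_mult (fg_inv (gen l)) (gen a))"

definition lambda_aut :: "'a::linorder \<Rightarrow> 'a letter list \<Rightarrow> 'a letter list" where
  "lambda_aut l = extend_hom (lambda_letter l)"

definition rho_aut :: "'a::linorder \<Rightarrow> 'a letter list \<Rightarrow> 'a letter list" where
  "rho_aut l = extend_hom (rho_letter l)"

end

theory Submission
  imports Defs
begin

text \<open>Reversal is an anti-automorphism of \<open>F(A)\<close>, so for a palindrome \<open>g = x\<^sub>1 \<dots> x\<^sub>n\<close>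
  the reversal of \<open>\<lambda>\<^sub>\<ell>(g) \<ell>\<close> is \<open>\<ell> rev(\<lambda>\<^sub>\<ell>(x\<^sub>n)) \<dots> rev(\<lambda>\<^sub>\<ell>(x\<^sub>1))\<close>.
  Every letter satisfies \<open>\<ell> rev(\<lambda>\<^sub>\<ell>(x)) = \<lambda>\<^sub>\<ell>(x) \<ell>\<close> (on generators this reads
  \<open>\<ell> \<ell>\<^sup>-\<^sup>1 a = a \<ell>\<^sup>-\<^sup>1 \<ell>\<close> and \<open>\<ell> a \<ell> = \<ell> a \<ell>\<close>), so \<open>\<ell>\<close> can be pushed to the right end,
  leaving \<open>\<lambda>\<^sub>\<ell>(x\<^sub>n) \<dots> \<lambda>\<^sub>\<ell>(x\<^sub>1) \<ell> = \<lambda>\<^sub>\<ell>(g) \<ell>\<close>. For \<open>\<rho>\<^sub>\<ell>\<close>, \<open>\<ell>\<close> is pushed to the left.\<close>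

lemma cancels_commute: "cancels x y \<longleftrightarrow> cancels y x"
  by (auto simp: cancels_def)

lemma reduced_iff_successively: "reduced w \<longleftrightarrow> successively (\<lambda>x y. \<not> cancels x y) w"
  by (induction w rule: reduced.induct) auto

lemma reduced_rev: "reduced w \<Longrightarrow> reduced (rev w)"
  by (simp add: reduced_iff_successively cancels_commute)

lemma reduced_Cons_tl: "reduced (x # w) \<Longrightarrow> reduced w"
  by (cases w) auto

lemma reduce_Nil [simp]: "reduce [] = []"
  by (simp add: reduce_def)

lemma reduce_Cons: "reduce (x # w) = (case reduce w of [] \<Rightarrow> [x]
   | y # ys \<Rightarrow> (if cancels x y then ys else x # reduce w))"
  by (simp add: reduce_def split: list.splits)

lemma reduced_reduce: "reduced (reduce w)"
  by (induction w) (auto simp: reduce_Cons split: list.splits dest: reduced_Cons_tl)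

lemma reduce_reduced: "reduced w \<Longrightarrow> reduce w = w"
  by (induction w rule: reduced.induct) (auto simp: reduce_Cons)

lemma reduce_idem [simp]: "reduce (reduce w) = reduce w"
  by (rule reduce_reduced[OF reduced_reduce])

lemma reduce_Cons_Cons_cancel:
  assumes "cancels x y"
  shows "reduce (x # y # w) = reduce w"
proof (cases "reduce w")
  case (Cons z zs)
  have "reduced (z # zs)"
    using reduced_reduce[of w] Cons by simp
  moreover have "cancels y z \<Longrightarrow> z = x"
    using assms by (cases x, cases y, cases z) (auto simp: cancels_def)
  ultimately show ?thesis
    using assms Cons by (cases zs) (auto simp: reduce_Cons)
qed (use assms in \<open>simp add: reduce_Cons\<close>)

lemma reduce_Cons_cong: "reduce w = reduce w' \<Longrightarrow> reduce (x # w) = reduce (x # w')"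
  by (simp only: reduce_Cons)

lemma reduce_append_reduce_right: "reduce (u @ v) = reduce (u @ reduce v)"
  by (induction u) (auto intro: reduce_Cons_cong)

lemma reduce_append_reduce_left: "reduce (u @ v) = reduce (reduce u @ v)"
proof (induction u)
  case (Cons x u)
  have "reduce ((x # u) @ v) = reduce (x # reduce u @ v)"
    using reduce_Cons_cong[OF Cons.IH] by simp
  also have "\<dots> = reduce (reduce (x # u) @ v)"
  proof (cases "reduce u")
    case (Cons y ys)
    then show ?thesis
      by (cases "cancels x y") (simp_all add: reduce_Cons_Cons_cancel reduce_Cons[of x u])
  qed (simp add: reduce_Cons)
  finally show ?case .
qed simp

lemma reduce_append_cong:
  "reduce u = reduce u' \<Longrightarrow> reduce v = reduce v' \<Longrightarrow> reduce (u @ v) = reduce (u' @ v')"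
  by (metis reduce_append_reduce_left reduce_append_reduce_right)

lemma reduce_rev: "reduce (rev w) = rev (reduce w)"
proof (induction w)
  case (Cons x w)
  have "reduce (rev (x # w)) = reduce (rev (reduce w) @ [x])"
    using Cons reduce_append_reduce_left[of "rev w" "[x]"] by simp
  also have "\<dots> = rev (reduce (x # w))"
  proof (cases "reduce w")
    case (Cons y ys)
    then have reduced_y_ys: "reduced (y # ys)"
      using reduced_reduce[of w] by simp
    show ?thesis
    proof (cases "cancels x y")
      case True
      have "reduce (rev ys @ [y, x]) = reduce (rev ys @ [])"
        using True by (intro reduce_append_cong) (simp_all add: reduce_Cons cancels_commute)
      then show ?thesis
        using Cons True reduced_rev[OF reduced_Cons_tl[OF reduced_y_ys]]
        by (simp add: reduce_Cons reduce_reduced)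
    next
      case False
      then have "reduced (rev (x # y # ys))"
        using reduced_y_ys by (intro reduced_rev) simp
      then show ?thesis
        using Cons False by (simp add: reduce_Cons reduce_reduced)
    qed
  qed (simp add: reduce_Cons)
  finally show ?case .
qed simp

lemma reduce_concat_map_intertwine:
  assumes "\<And>x. x \<in> set xs \<Longrightarrow> reduce (c @ \<psi> x) = reduce (\<phi> x @ c)"
  shows "reduce (c @ concat (map \<psi> xs)) = reduce (concat (map \<phi> xs) @ c)"
  using assms
proof (induction xs)
  case (Cons x xs)
  have IH: "reduce (c @ concat (map \<psi> xs)) = reduce (concat (map \<phi> xs) @ c)"
    using Cons.IH Cons.prems by simp
  have "reduce (c @ concat (map \<psi> (x # xs))) = reduce ((c @ \<psi> x) @ concat (map \<psi> xs))"
    by simp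
  also have "\<dots> = reduce ((\<phi> x @ c) @ concat (map \<psi> xs))"
    using Cons.prems by (intro reduce_append_cong[OF _ refl]) simp
  also have "\<dots> = reduce (\<phi> x @ concat (map \<phi> xs) @ c)"
    unfolding append_assoc by (rule reduce_append_cong[OF refl IH])
  finally show ?case
    by simp
qed simp

definition letter_image :: "('a \<Rightarrow> 'a letter list) \<Rightarrow> 'a letter \<Rightarrow> 'a letter list" where
  "letter_image f = (\<lambda>(b, a). if b then f a else fg_inv (f a))"

lemma extend_hom_eq: "extend_hom f w = reduce (concat (map (letter_image f) w))"
  by (simp add: extend_hom_def letter_image_def)

lemma palindrome_iff: "palindrome w \<longleftrightarrow> rev w = w"
  by (simp add: palindrome_def reversal_def)

lemma rev_concat_map_palindrome:
  "palindrome g \<Longrightarrow> rev (concat (map f g)) = concat (map (rev \<circ> f) g)"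
  by (simp add: rev_concat rev_map palindrome_iff)

lemma palindrome_extend_hom_mult:
  assumes "palindrome g" and "palindrome c"
    and "\<And>x. reduce (c @ rev (letter_image f x)) = reduce (letter_image f x @ c)"
  shows "palindrome (fg_mult (extend_hom f g) c)"
proof -
  let ?H = "concat (map (letter_image f) g)"
  have "fg_mult (extend_hom f g) c = reduce (?H @ c)"
    unfolding fg_mult_def extend_hom_eq by (rule reduce_append_reduce_left[symmetric])
  moreover have "rev (reduce (?H @ c)) = reduce (c @ concat (map (rev \<circ> letter_image f) g))"
    using assms(1,2) by (simp add: reduce_rev[symmetric] rev_concat_map_palindrome palindrome_iff)
  moreover have "\<dots> = reduce (?H @ c)"
    by (rule reduce_concat_map_intertwine) (simp add: assms(3))
  ultimately show ?thesis
    by (simp add: palindrome_iff)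
qed

lemma palindrome_mult_extend_hom:
  assumes "palindrome g" and "palindrome c"
    and "\<And>x. reduce (rev (letter_image f x) @ c) = reduce (c @ letter_image f x)"
  shows "palindrome (fg_mult c (extend_hom f g))"
proof -
  let ?H = "concat (map (letter_image f) g)"
  have "fg_mult c (extend_hom f g) = reduce (c @ ?H)"
    unfolding fg_mult_def extend_hom_eq by (rule reduce_append_reduce_right[symmetric])
  moreover have "rev (reduce (c @ ?H)) = reduce (concat (map (rev \<circ> letter_image f) g) @ c)"
    using assms(1,2) by (simp add: reduce_rev[symmetric] rev_concat_map_palindrome palindrome_iff)
  moreover have "reduce (c @ ?H) = \<dots>"
    by (rule reduce_concat_map_intertwine) (simp add: assms(3))
  ultimately show ?thesis
    by (simp add: palindrome_iff)
qed

lemma palindrome_gen: "palindrome (gen a)"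
  by (simp add: palindrome_iff gen_def)

lemma gen_rev_lambda_letter_image:
  "reduce (gen l @ rev (letter_image (lambda_letter l) x))
     = reduce (letter_image (lambda_letter l) x @ gen l)"
  by (cases x, cases "fst x"; cases "snd x" l rule: linorder_cases)
    (auto simp: letter_image_def lambda_letter_def fg_mult_def fg_inv_def gen_def cancels_def reduce_Cons)

lemma rev_rho_letter_image_gen:
  "reduce (rev (letter_image (rho_letter l) x) @ gen l)
     = reduce (gen l @ letter_image (rho_letter l) x)"
  by (cases x, cases "fst x"; cases "snd x" l rule: linorder_cases)
    (auto simp: letter_image_def rho_letter_def fg_mult_def fg_inv_def gen_def cancels_def reduce_Cons)

theorem lemma4p1:
  fixes l :: "'a::linorder" and g :: "'a letter list"
  assumes "reduced g" and "palindrome g"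
  shows "palindrome (fg_mult (lambda_aut l g) (gen l))
       \<and> palindrome (fg_mult (gen l) (rho_aut l g))"
  unfolding lambda_aut_def rho_aut_def
  using palindrome_extend_hom_mult[OF assms(2) palindrome_gen gen_rev_lambda_letter_image]
    palindrome_mult_extend_hom[OF assms(2) palindrome_gen rev_rho_letter_image_gen]
  by blast

end
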